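(* Consider a discrete-time system $x_{k+1}=A_kx_k+b_ku_k$, $y_k=c_kx_k$ ($k\in\mathbb{Z}$), $c_k\in\mathbb{R}^{1\times n}$, which is in controller canonical form and completely observable, and such that for every $k\in\mathbb{N}$ the first coordinate of $c_k$ is nonzero (i.e. $c_k(1,0,\dots,0)^T\neq0$). Then there is $N\in\mathbb{N}$ such that for every initial state $x_0\in\mathbb{R}^n$ there are scalars $F_0,F_1,\dots,F_N$ such that the feedback $u_k=F_ky_k$ (i.e. the dynamics $x_{k+1}=(A_k+F_kb_kc_k)x_k$) yields $x_N=0$.
   Context: Controller canonical form: for every $k$, $b_k=(0,\dots,0,1)^T$ and $A_k\in\mathbb{R}^{n\times n}$ has ones on the superdiagonal (entries $(i,i+1)$, $1\le i\le n-1$), zeros elsewhere in its first $n-1$ rows, and an arbitrary last row $(\alpha_{k,1},\dots,\alpha_{k,n})$. Complete observability: for every $k\in\mathbb{Z}$ and all controls $u_k,\dots,u_{k+n-2}$, the state $x_k$ is uniquely determined by $y_k,\dots,y_{k+n-1}$. *)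

theory Defs
  imports "Jordan_Normal_Form.Matrix"
begin

text \<open>The row vector c k is represented as a vector of dimension n.\<close>

definition ccf :: "nat \<Rightarrow> real mat \<Rightarrow> real vec \<Rightarrow> bool" where
  "ccf n A b \<longleftrightarrow> A \<in> carrier_mat n n \<and> b = unit_vec n (n - 1) \<and>
     (\<forall>i<n - 1. \<forall>j<n. A $$ (i, j) = (if j = i + 1 then 1 else 0))"

fun traj :: "(int \<Rightarrow> real mat) \<Rightarrow> (int \<Rightarrow> real vec) \<Rightarrow> int \<Rightarrow> real vec \<Rightarrow> (int \<Rightarrow> real) \<Rightarrow> nat \<Rightarrow> real vec" where
  "traj A b k x u 0 = x"
| "traj A b k x u (Suc j) = A (k + int j) *\<^sub>v traj A b k x u j + u (k + int j) \<cdot>\<^sub>v b (k + int j)"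

definition completely_observable :: "nat \<Rightarrow> (int \<Rightarrow> real mat) \<Rightarrow> (int \<Rightarrow> real vec) \<Rightarrow> (int \<Rightarrow> real vec) \<Rightarrow> bool" where
  "completely_observable n A b c \<longleftrightarrow>
     (\<forall>k u x x'. x \<in> carrier_vec n \<longrightarrow> x' \<in> carrier_vec n \<longrightarrow>
        (\<forall>j<n. c (k + int j) \<bullet> traj A b k x u j = c (k + int j) \<bullet> traj A b k x' u j) \<longrightarrow> x = x')"

fun closed_loop :: "(int \<Rightarrow> real mat) \<Rightarrow> (int \<Rightarrow> real vec) \<Rightarrow> (int \<Rightarrow> real vec) \<Rightarrow> (nat \<Rightarrow> real) \<Rightarrow> real vec \<Rightarrow> nat \<Rightarrow> real vec" where
  "closed_loop A b c F x0 0 = x0"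
| "closed_loop A b c F x0 (Suc k) =
     A (int k) *\<^sub>v closed_loop A b c F x0 k + (F k * (c (int k) \<bullet> closed_loop A b c F x0 k)) \<cdot>\<^sub>v b (int k)"

end

theory Submission
  imports Defs "HOL-Library.Function_Algebras"
begin

text \<open>In controller canonical form the state is a window of \<open>n\<close> consecutive entries of a
  scalar sequence, shifted by one at each step; the feedback determines the newly appended entry,
  freely when the output \<open>y\<^sub>k\<close> is nonzero and as the open-loop value when \<open>y\<^sub>k = 0\<close>.
  For an initial state \<open>x\<^sub>0\<close> let \<open>W\<^sub>k\<close> be the subspace generated step by step by the states
  reachable at time \<open>k\<close>. Its dimension never decreases (since \<open>c\<^sub>k e\<^sub>1 \<noteq> 0\<close>), and it grows at
  every free step unless \<open>e\<^sub>1 \<in> W\<^sub>k\<close> (\<open>e\<^sub>1\<close> is \<open>unit_fun 0\<close> below). As the dimension is at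
  most \<open>n\<close>, one of the blocks \<open>[jn, (j+1)n]\<close>, \<open>j \<le> n\<close>, has constant dimension. On such a block,
  observability bounds \<open>dim W\<^sub>T\<close> by the number of free steps, which forces appending \<open>0\<close> at every
  free step to annihilate every state of \<open>W\<^sub>T\<close>, and \<open>e\<^sub>1 \<in> W\<^sub>k\<close> at the free steps makes the
  outputs along this run generically nonzero. A generic admissible trajectory up to time \<open>T\<close>
  followed by this run reaches \<open>0\<close> at time \<open>T + n \<le> (n+1)n\<close>.\<close>

instantiation "fun" :: (type, real_vector) real_vector
begin

definition scaleR_fun :: "real \<Rightarrow> ('a \<Rightarrow> 'b) \<Rightarrow> 'a \<Rightarrow> 'b" where
  "scaleR_fun r f = (\<lambda>x. r *\<^sub>R f x)"

instance
  by standard (simp_all add: scaleR_fun_def fun_eq_iff scaleR_add_right scaleR_add_left)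

end

lemma scaleR_fun_apply [simp]: "(r *\<^sub>R f) x = r *\<^sub>R f x"
  by (simp add: scaleR_fun_def)

lemma sum_fun_apply [simp]: "(\<Sum>i\<in>A. f i) x = (\<Sum>i\<in>A. f i x)"
  by (induction A rule: infinite_finite_induct) auto

text \<open>The library has the following dimension facts only for finite-dimensional types, which
  \<open>nat \<Rightarrow> real\<close> is not; finite dimensionality of the subspaces is assumed instead where needed.\<close>

lemma dim_le_dim_if_subset:
  fixes U V :: "'a::real_vector set"
  assumes "U \<subseteq> V" and "V \<subseteq> span E" and "finite E"
  shows "dim U \<le> dim V"
proof -
  obtain B where B: "B \<subseteq> U" "independent B" "U \<subseteq> span B" "card B = dim U"
    using basis_exists by blast
  obtain C where C: "C \<subseteq> V" "independent C" "V \<subseteq> span C" "card C = dim V"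
    using basis_exists by blast
  have "finite C"
    using independent_span_bound[OF \<open>finite E\<close> C(2)] C(1) assms(2) by blast
  then show ?thesis
    using independent_span_bound[OF _ B(2)] B(1,4) C(3,4) assms(1) by (metis subset_trans)
qed

lemma dim_less_dim_if_psubset:
  fixes U V :: "'a::real_vector set"
  assumes "subspace U" and "U \<subseteq> V" and "x \<in> V" and "x \<notin> U"
    and "V \<subseteq> span E" and "finite E"
  shows "dim U < dim V"
proof -
  obtain B where B: "B \<subseteq> U" "independent B" "U \<subseteq> span B" "card B = dim U"
    using basis_exists by blast
  have "span B = U"
    using span_subspace[OF B(1,3) assms(1)] .
  then have indep: "independent (insert x B)"
    using B(2) assms(4) by (simp add: independent_insert)
  have "finite B"
    using independent_span_bound[OF assms(6) B(2)] B(1) assms(2,5) by blast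
  moreover have "x \<notin> B"
    using B(1) assms(4) by blast
  ultimately have "card (insert x B) = dim U + 1"
    using B(4) by simp
  moreover have "dim (insert x B) \<le> dim V"
    using dim_le_dim_if_subset[OF _ assms(5,6)] B(1) assms(2,3) by blast
  ultimately show ?thesis
    using dim_eq_card_independent[OF indep] by simp
qed

lemma dim_linear_image_inj_on:
  assumes "linear f" and "subspace V" and "inj_on f V"
  shows "dim (f ` V) = dim V"
proof -
  obtain B where B: "B \<subseteq> V" "independent B" "V \<subseteq> span B" "card B = dim V"
    using basis_exists by blast
  have span_B: "span B = V"
    using span_subspace[OF B(1,3) assms(2)] .
  have "f ` V = span (f ` B)"
    using span_linear_image[OF assms(1)] span_B by simp
  moreover have "independent (f ` B)"
    using linear_independent_injective_image[OF assms(1) B(2)] assms(3) span_B by simp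
  moreover have "card (f ` B) = card B"
    using card_image inj_on_subset[OF assms(3) B(1)] by blast
  ultimately show ?thesis
    using B(4) by (simp add: dim_eq_card_independent)
qed

lemma span_coordinate_family:
  fixes w :: "'a \<Rightarrow> 'a \<Rightarrow> real"
  assumes "finite F" and w: "\<And>i j. i \<in> F \<Longrightarrow> j \<in> F \<Longrightarrow> w i j = (if i = j then 1 else 0)"
    and "x \<in> span (w ` F)"
  shows "x = (\<Sum>i\<in>F. x i *\<^sub>R w i)"
proof -
  let ?S = "{x. x = (\<Sum>i\<in>F. x i *\<^sub>R w i)}"
  have "linear (\<lambda>x. x - (\<Sum>i\<in>F. x i *\<^sub>R w i))"
    by (rule linearI) (simp_all add: scaleR_add_left sum.distrib scaleR_sum_right algebra_simps)
  then have "subspace ?S"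
    using linear_subspace_kernel by fastforce
  moreover have "w ` F \<subseteq> ?S"
  proof
    fix y assume "y \<in> w ` F"
    then obtain k where "k \<in> F" "y = w k" by blast
    have "(\<Sum>i\<in>F. w k i *\<^sub>R w i) = (\<Sum>i\<in>F. if i = k then w i else 0)"
      using w \<open>k \<in> F\<close> by (intro sum.cong) auto
    then show "y \<in> ?S"
      using \<open>finite F\<close> \<open>k \<in> F\<close> \<open>y = w k\<close> by simp
  qed
  ultimately show ?thesis
    using span_minimal assms(3) by blast
qed

lemma independent_coordinate_family:
  fixes w :: "'a \<Rightarrow> 'a \<Rightarrow> real"
  assumes "finite F" and w: "\<And>i j. i \<in> F \<Longrightarrow> j \<in> F \<Longrightarrow> w i j = (if i = j then 1 else 0)"
  shows "independent (w ` F)" and "inj_on w F"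
proof -
  show "inj_on w F"
    by (rule inj_onI) (metis w zero_neq_one)
  show "independent (w ` F)"
    unfolding dependent_def
  proof clarify
    fix k assume k: "k \<in> F" and "w k \<in> span (w ` F - {w k})"
    then have "w k \<in> span (w ` (F - {k}))"
      using span_mono[of "w ` F - {w k}" "w ` (F - {k})"] by blast
    then have "w k = (\<Sum>i\<in>F - {k}. w k i *\<^sub>R w i)"
      using span_coordinate_family[of "F - {k}" w] w \<open>finite F\<close> by simp
    also have "\<dots> = 0"
      using w k by (intro sum.neutral) auto
    finally show False
      using w[OF k k] by (metis zero_fun_apply zero_neq_one)
  qed
qed

lemma card_lt_dim_if_coordinate_family:
  fixes w :: "'a \<Rightarrow> 'a \<Rightarrow> real"
  assumes "finite F" and w: "\<And>i j. i \<in> F \<Longrightarrow> j \<in> F \<Longrightarrow> w i j = (if i = j then 1 else 0)"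
    and "x \<noteq> 0" and x: "\<And>j. j \<in> F \<Longrightarrow> x j = 0"
    and "insert x (w ` F) \<subseteq> V" and "V \<subseteq> span E" and "finite E"
  shows "card F < dim V"
proof -
  have "x \<notin> span (w ` F)"
  proof
    assume "x \<in> span (w ` F)"
    then have "x = (\<Sum>i\<in>F. x i *\<^sub>R w i)"
      using span_coordinate_family[OF \<open>finite F\<close> w] by blast
    also have "\<dots> = 0"
      by (rule sum.neutral) (simp add: x)
    finally show False
      using \<open>x \<noteq> 0\<close> by contradiction
  qed
  then have indep: "independent (insert x (w ` F))"
    using independent_coordinate_family(1)[OF \<open>finite F\<close> w] by (simp add: independent_insert)
  have "x \<notin> w ` F"
    using \<open>x \<notin> span (w ` F)\<close> span_base[of x "w ` F"] by blast
  then have "card (insert x (w ` F)) = card F + 1"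
    using card_image[OF independent_coordinate_family(2)[OF \<open>finite F\<close> w]] \<open>finite F\<close> by simp
  moreover have "dim (insert x (w ` F)) \<le> dim V"
    using dim_le_dim_if_subset assms(5-7) by blast
  ultimately show ?thesis
    using dim_eq_card_independent[OF indep] by simp
qed

lemma exists_avoiding_hyperplanes:
  fixes a b :: "'a::real_vector"
  assumes "finite L" and "\<And>l. l \<in> L \<Longrightarrow> linear l \<and> (l b \<noteq> 0 \<or> l a \<noteq> (0::real))"
  shows "\<exists>v. \<forall>l\<in>L. l (b + v *\<^sub>R a) \<noteq> 0"
proof -
  have "finite ((\<lambda>l. - l b / l a) ` L)"
    using assms(1) by simp
  then obtain v where v: "v \<notin> (\<lambda>l. - l b / l a) ` L"
    using ex_new_if_finite[OF infinite_UNIV_char_0] by blast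
  have "l (b + v *\<^sub>R a) \<noteq> 0" if "l \<in> L" for l
  proof -
    have "l (b + v *\<^sub>R a) = l b + v * l a"
      using assms(2)[OF that] by (simp add: linear_add linear_scale)
    moreover have "v \<noteq> - l b / l a"
      using v that by blast
    ultimately show ?thesis
      using assms(2)[OF that] by (cases "l a = 0") (auto simp: field_simps)
  qed
  then show ?thesis
    by blast
qed

lemma bounded_mono_nat_seq_has_flat_step:
  fixes f :: "nat \<Rightarrow> nat"
  assumes mono: "\<And>j. f j \<le> f (Suc j)" and bounded: "\<And>j. f j \<le> m"
  shows "\<exists>j\<le>m. f (Suc j) = f j"
proof (rule ccontr)
  assume "\<not> ?thesis"
  then have step: "f j < f (Suc j)" if "j \<le> m" for j
    using mono[of j] that by (metis le_neq_implies_less)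
  have "j \<le> f j" if "j \<le> Suc m" for j
    using that
  proof (induction j)
    case (Suc j)
    then show ?case
      using step[of j] by simp
  qed simp
  then show False
    using bounded[of "Suc m"] by (metis not_less_eq_eq order.refl)
qed

definition unit_fun :: "nat \<Rightarrow> nat \<Rightarrow> real" where
  "unit_fun i = (\<lambda>j. if j = i then 1 else 0)"

locale companion_form =
  fixes n :: nat and \<alpha> :: "nat \<Rightarrow> nat \<Rightarrow> real"
  assumes n_pos: "0 < n"
begin

text \<open>Vectors of \<open>\<real>\<^sup>n\<close> are functions \<open>nat \<Rightarrow> real\<close> vanishing from \<open>n\<close> on (coordinates
  \<open>0, \<dots>, n - 1\<close>), so that the library's \<open>span\<close> and \<open>dim\<close> apply to them.\<close>

definition states :: "(nat \<Rightarrow> real) set" where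
  "states = {z. \<forall>i\<ge>n. z i = 0}"

definition shift :: "(nat \<Rightarrow> real) \<Rightarrow> nat \<Rightarrow> real" where
  "shift z i = (if Suc i < n then z (Suc i) else 0)"

definition dot :: "(nat \<Rightarrow> real) \<Rightarrow> (nat \<Rightarrow> real) \<Rightarrow> real" where
  "dot a z = (\<Sum>i<n. a i * z i)"

abbreviation e_last :: "nat \<Rightarrow> real" where
  "e_last \<equiv> unit_fun (n - 1)"

definition companion :: "nat \<Rightarrow> (nat \<Rightarrow> real) \<Rightarrow> nat \<Rightarrow> real" where
  "companion k z = shift z + dot (\<alpha> k) z *\<^sub>R e_last"

definition rotate :: "(nat \<Rightarrow> real) \<Rightarrow> nat \<Rightarrow> real" where
  "rotate z = shift z + z 0 *\<^sub>R e_last"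

fun open_loop :: "nat \<Rightarrow> (nat \<Rightarrow> real) \<Rightarrow> nat \<Rightarrow> nat \<Rightarrow> real" where
  "open_loop T z 0 = z"
| "open_loop T z (Suc j) = companion (T + j) (open_loop T z j)"

lemma linear_shift: "linear shift"
  by (rule linearI) (simp_all add: shift_def fun_eq_iff)

lemma linear_dot: "linear (dot a)"
  by (rule linearI) (simp_all add: dot_def algebra_simps sum.distrib sum_distrib_left)

lemma linear_companion: "linear (companion k)"
  by (rule linearI)
    (simp_all add: companion_def linear_add[OF linear_shift] linear_add[OF linear_dot]
      linear_scale[OF linear_shift] linear_scale[OF linear_dot] algebra_simps)

lemma linear_open_loop: "linear (\<lambda>z. open_loop T z j)"
proof (induction j)
  case (Suc j)
  then show ?case
    using linear_compose[OF Suc linear_companion] by (simp add: o_def)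
qed (simp add: module_hom_ident)

lemma linear_rotate: "linear rotate"
  by (rule linearI)
    (simp_all add: rotate_def linear_add[OF linear_shift] linear_scale[OF linear_shift] algebra_simps)

lemma subspace_states: "subspace states"
  by (auto simp: subspace_def states_def)

lemma states_subset_span: "states \<subseteq> span (unit_fun ` {..<n})"
proof
  fix z assume "z \<in> states"
  then have "z = (\<Sum>i<n. z i *\<^sub>R unit_fun i)"
    by (auto simp: fun_eq_iff states_def unit_fun_def if_distrib[of "\<lambda>r. z _ * r"] cong: if_cong)
  also have "\<dots> \<in> span (unit_fun ` {..<n})"
    by (intro span_sum span_scale span_base) auto
  finally show "z \<in> span (unit_fun ` {..<n})" .
qed

lemma unit_fun_in_states: "i < n \<Longrightarrow> unit_fun i \<in> states"
  by (simp add: states_def unit_fun_def)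

lemma shift_in_states: "shift z \<in> states"
  by (simp add: states_def shift_def)

lemma companion_in_states: "companion k z \<in> states"
  using n_pos shift_in_states unit_fun_in_states[of "n - 1"]
  by (simp add: companion_def subspace_add subspace_scale subspace_states)

lemma dot_unit_fun_0: "dot a (unit_fun 0) = a 0"
  using n_pos by (simp add: dot_def unit_fun_def if_distrib[of "\<lambda>r. a _ * r"] sum.delta cong: if_cong)

lemma eq_unit_fun_0_if_shift_eq_0:
  assumes "z \<in> states" and "shift z = 0"
  shows "z = z 0 *\<^sub>R unit_fun 0"
proof
  fix i
  show "z i = (z 0 *\<^sub>R unit_fun 0) i"
  proof (cases i)
    case (Suc j)
    then have "z i = 0 \<or> shift z j = z i"
      using assms(1) by (auto simp: states_def shift_def)
    then show ?thesis
      using assms(2) Suc by (auto simp: unit_fun_def)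
  qed (simp add: unit_fun_def)
qed

lemma inj_on_rotate: "inj_on rotate states"
  unfolding linear_inj_on_iff_eq_0[OF linear_rotate subspace_states]
proof clarify
  fix z assume z: "z \<in> states" "rotate z = 0"
  then have "rotate z (n - 1) = 0"
    by simp
  then have "z 0 = 0"
    using n_pos by (simp add: rotate_def shift_def unit_fun_def)
  then have "shift z = 0"
    using z(2) by (simp add: rotate_def)
  then show "z = 0"
    using eq_unit_fun_0_if_shift_eq_0[OF z(1)] \<open>z 0 = 0\<close> by simp
qed

lemma rotate_unit_fun_0: "rotate (unit_fun 0) = e_last"
  by (simp add: rotate_def shift_def unit_fun_def fun_eq_iff)

lemma inj_on_companion:
  assumes "subspace V" and "V \<subseteq> states" and "\<forall>z\<in>V. dot a z = 0" and "a 0 \<noteq> 0"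
  shows "inj_on (companion k) V"
  unfolding linear_inj_on_iff_eq_0[OF linear_companion assms(1)]
proof clarify
  fix z assume z: "z \<in> V" "companion k z = 0"
  have "shift z = 0"
  proof
    fix i
    have "companion k z i = 0"
      using z(2) by simp
    then show "shift z i = 0 i"
      using n_pos by (cases "i = n - 1") (auto simp: companion_def shift_def unit_fun_def)
  qed
  then have z_eq: "z = z 0 *\<^sub>R unit_fun 0"
    using eq_unit_fun_0_if_shift_eq_0 assms(2) z(1) by blast
  then have "dot a z = z 0 * a 0"
    using linear_scale[OF linear_dot] dot_unit_fun_0 by (metis real_scaleR_def)
  then have "z 0 * a 0 = 0"
    using assms(3) z(1) by simp
  then show "z = 0"
    using z_eq assms(4) by simp
qed

end

locale ccf_system = companion_form +
  fixes c :: "nat \<Rightarrow> nat \<Rightarrow> real"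
  assumes c_first_nonzero: "c k 0 \<noteq> 0"
    and observable:
      "z \<in> states \<Longrightarrow> (\<And>j. j < n \<Longrightarrow> dot (c (T + j)) (open_loop T z j) = 0) \<Longrightarrow> z = 0"
begin

text \<open>Under the feedback \<open>u\<^sub>k = F\<^sub>k y\<^sub>k\<close> the new last coordinate
  \<open>dot (\<alpha> k) x + F\<^sub>k y\<^sub>k\<close> can be given any value when \<open>y\<^sub>k \<noteq> 0\<close>, and is forced otherwise.\<close>

definition admissible_step :: "nat \<Rightarrow> (nat \<Rightarrow> real) \<Rightarrow> (nat \<Rightarrow> real) \<Rightarrow> bool" where
  "admissible_step k x x' \<longleftrightarrow>
     (\<exists>v. x' = shift x + v *\<^sub>R e_last \<and> (dot (c k) x = 0 \<longrightarrow> v = dot (\<alpha> k) x))"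

definition admissible :: "nat \<Rightarrow> (nat \<Rightarrow> nat \<Rightarrow> real) \<Rightarrow> bool" where
  "admissible N xs \<longleftrightarrow> (\<forall>k<N. admissible_step k (xs k) (xs (Suc k)))"

lemma admissible_step_companion: "admissible_step k x (companion k x)"
  unfolding admissible_step_def companion_def by blast

lemma admissible_step_zero: "admissible_step k 0 0"
  unfolding admissible_step_def
  by (rule exI[of _ 0]) (simp add: linear_0[OF linear_shift] linear_0[OF linear_dot])

lemma admissible_Suc:
  "admissible (Suc k) xs \<longleftrightarrow> admissible k xs \<and> admissible_step k (xs k) (xs (Suc k))"
  by (auto simp: admissible_def less_Suc_eq)

lemma admissible_extend:
  assumes "admissible k xs" and "admissible_step k (xs k) x"
  shows "admissible (Suc k) (xs(Suc k := x))"
  using assms by (simp add: admissible_def less_Suc_eq)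

lemma admissible_pad_zero:
  assumes "admissible M xs" and "xs M = 0" and "M \<le> N"
  shows "admissible N (\<lambda>k. if k \<le> M then xs k else 0)"
  unfolding admissible_def
proof (intro allI impI)
  fix k assume "k < N"
  consider "k < M" | "k = M" | "k > M"
    by linarith
  then show "admissible_step k (if k \<le> M then xs k else 0) (if Suc k \<le> M then xs (Suc k) else 0)"
    by cases (use assms admissible_step_zero in \<open>auto simp: admissible_def\<close>)
qed

end

locale ccf_reachable = ccf_system +
  fixes x0 :: "nat \<Rightarrow> real"
  assumes x0_state: "x0 \<in> states"
begin

text \<open>\<open>reach_space k\<close> is a subspace containing every state that an admissible trajectory
  from \<open>x0\<close> can occupy at time \<open>k\<close>; step \<open>k\<close> is \<open>free\<close> if a generic such trajectory
  has nonzero output there.\<close>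

fun reach_space :: "nat \<Rightarrow> (nat \<Rightarrow> real) set" where
  "reach_space 0 = span {x0}"
| "reach_space (Suc k) =
     (if \<exists>z\<in>reach_space k. dot (c k) z \<noteq> 0
      then span (insert e_last (shift ` reach_space k))
      else companion k ` reach_space k)"

declare reach_space.simps(2) [simp del]

definition free :: "nat \<Rightarrow> bool" where
  "free k \<longleftrightarrow> (\<exists>z\<in>reach_space k. dot (c k) z \<noteq> 0)"

lemma subspace_reach_space: "subspace (reach_space k)"
  by (induction k)
    (simp_all add: reach_space.simps(2) subspace_span linear_subspace_image[OF linear_companion])

lemma reach_space_subset_states: "reach_space k \<subseteq> states"
proof (induction k)
  case 0
  show ?case
    using span_minimal[OF _ subspace_states] x0_state by simp
next
  case (Suc k)
  have "insert e_last (shift ` reach_space k) \<subseteq> states"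
    using n_pos shift_in_states unit_fun_in_states[of "n - 1"] by auto
  then show ?case
    using span_minimal[OF _ subspace_states] companion_in_states
    by (auto simp: reach_space.simps(2))
qed

lemma reach_space_Suc_forced:
  "\<not> free k \<Longrightarrow> reach_space (Suc k) = companion k ` reach_space k"
  by (simp add: reach_space.simps(2) free_def)

lemma reach_space_Suc_free:
  assumes "free k"
  shows "reach_space (Suc k) = {shift z + v *\<^sub>R e_last | z v. z \<in> reach_space k}"
proof -
  have span_shift: "span (shift ` reach_space k) = shift ` reach_space k"
    by (metis span_linear_image[OF linear_shift] span_eq_iff subspace_reach_space)
  have "span (insert e_last (shift ` reach_space k))
      = {x. \<exists>v. x - v *\<^sub>R e_last \<in> shift ` reach_space k}"
    unfolding span_insert span_shift ..
  also have "\<dots> = {shift z + v *\<^sub>R e_last | z v. z \<in> reach_space k}"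
    by (auto simp: algebra_simps) (metis diff_add_cancel, metis add_diff_cancel image_eqI)
  finally show ?thesis
    using assms by (simp add: reach_space.simps(2) free_def)
qed

lemma companion_in_reach_space:
  "z \<in> reach_space k \<Longrightarrow> companion k z \<in> reach_space (Suc k)"
  by (cases "free k") (auto simp: reach_space_Suc_forced reach_space_Suc_free companion_def)

lemma open_loop_in_reach_space:
  "z \<in> reach_space T \<Longrightarrow> open_loop T z j \<in> reach_space (T + j)"
  by (induction j) (simp_all add: companion_in_reach_space)

lemma admissible_in_reach_space:
  "admissible k xs \<Longrightarrow> xs 0 = x0 \<Longrightarrow> xs k \<in> reach_space k"
proof (induction k)
  case 0
  then show ?case
    by (simp add: span_base)
next
  case (Suc k)
  then have xk: "xs k \<in> reach_space k" and step: "admissible_step k (xs k) (xs (Suc k))"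
    by (simp_all add: admissible_Suc)
  then obtain v where v: "xs (Suc k) = shift (xs k) + v *\<^sub>R e_last"
      and forced: "dot (c k) (xs k) = 0 \<Longrightarrow> v = dot (\<alpha> k) (xs k)"
    unfolding admissible_step_def by blast
  show ?case
  proof (cases "free k")
    case True
    then show ?thesis
      unfolding reach_space_Suc_free[OF True] using xk v by blast
  next
    case False
    then have "xs (Suc k) = companion k (xs k)"
      using xk v forced by (simp add: free_def companion_def)
    then show ?thesis
      using companion_in_reach_space[OF xk] by simp
  qed
qed

lemma dim_reach_space_le: "dim (reach_space k) \<le> n"
proof -
  have "dim (reach_space k) \<le> card (unit_fun ` {..<n})"
    using dim_le_card[OF order.trans[OF reach_space_subset_states states_subset_span]] by simp
  also have "\<dots> \<le> n"
    using card_image_le[of "{..<n}" unit_fun] by simp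
  finally show ?thesis .
qed

lemma rotate_image_subset:
  "free k \<Longrightarrow> rotate ` reach_space k \<subseteq> reach_space (Suc k)"
  by (auto simp: reach_space_Suc_free rotate_def)

lemma dim_rotate_image: "dim (rotate ` reach_space k) = dim (reach_space k)"
  using dim_linear_image_inj_on[OF linear_rotate subspace_reach_space]
    inj_on_subset[OF inj_on_rotate reach_space_subset_states] by blast

lemma dim_reach_space_Suc: "dim (reach_space k) \<le> dim (reach_space (Suc k))"
proof (cases "free k")
  case True
  then show ?thesis
    using dim_le_dim_if_subset[OF rotate_image_subset[OF True]
        order.trans[OF reach_space_subset_states states_subset_span]]
    by (simp add: dim_rotate_image)
next
  case False
  then have "\<forall>z\<in>reach_space k. dot (c k) z = 0"
    by (simp add: free_def)
  then have "inj_on (companion k) (reach_space k)"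
    using inj_on_companion subspace_reach_space reach_space_subset_states c_first_nonzero by blast
  then show ?thesis
    using dim_linear_image_inj_on[OF linear_companion subspace_reach_space]
    by (simp add: reach_space_Suc_forced[OF False])
qed

text \<open>Since \<open>rotate\<close> maps \<open>unit_fun 0\<close> to \<open>e_last\<close>, a free step through a space
  avoiding \<open>unit_fun 0\<close> gains the new direction \<open>e_last\<close>.\<close>

lemma dim_reach_space_Suc_less:
  assumes "free k" and "unit_fun 0 \<notin> reach_space k"
  shows "dim (reach_space k) < dim (reach_space (Suc k))"
proof -
  have "e_last = shift 0 + 1 *\<^sub>R e_last"
    by (simp add: linear_0[OF linear_shift])
  then have "e_last \<in> reach_space (Suc k)"
    unfolding reach_space_Suc_free[OF assms(1)] using subspace_0[OF subspace_reach_space] by blast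
  moreover have "e_last \<notin> rotate ` reach_space k"
  proof
    assume "e_last \<in> rotate ` reach_space k"
    then obtain z where "z \<in> reach_space k" "rotate z = rotate (unit_fun 0)"
      by (auto simp: rotate_unit_fun_0)
    moreover have "unit_fun 0 \<in> states"
      using n_pos by (simp add: unit_fun_in_states)
    ultimately have "z = unit_fun 0"
      using inj_on_rotate reach_space_subset_states by (auto dest: inj_onD)
    then show False
      using assms(2) \<open>z \<in> reach_space k\<close> by simp
  qed
  ultimately show ?thesis
    using dim_less_dim_if_psubset[OF linear_subspace_image[OF linear_rotate subspace_reach_space]
        rotate_image_subset[OF assms(1)] _ _ order.trans[OF reach_space_subset_states states_subset_span]]
    by (simp add: dim_rotate_image)
qed

lemma dim_reach_space_mono: "k \<le> k' \<Longrightarrow> dim (reach_space k) \<le> dim (reach_space k')"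
  using lift_Suc_mono_le[of "\<lambda>k. dim (reach_space k)"] dim_reach_space_Suc by blast

lemma exists_flat_block: "\<exists>j\<le>n. dim (reach_space (j * n + n)) = dim (reach_space (j * n))"
  using bounded_mono_nat_seq_has_flat_step[of "\<lambda>j. dim (reach_space (j * n))" n]
    dim_reach_space_mono dim_reach_space_le by (simp add: add.commute)

lemma unit_fun_0_in_flat_block:
  assumes flat: "dim (reach_space (T + n)) = dim (reach_space T)"
    and "i < n" and "free (T + i)"
  shows "unit_fun 0 \<in> reach_space (T + i)"
proof (rule ccontr)
  assume "unit_fun 0 \<notin> reach_space (T + i)"
  then have "dim (reach_space (T + i)) < dim (reach_space (Suc (T + i)))"
    using dim_reach_space_Suc_less assms(3) by blast
  moreover have "dim (reach_space T) \<le> dim (reach_space (T + i))"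
    and "dim (reach_space (Suc (T + i))) \<le> dim (reach_space (T + n))"
    using assms(2) by (simp_all add: dim_reach_space_mono)
  ultimately show False
    using flat by simp
qed

text \<open>\<open>run T z v\<close> starts in \<open>z\<close> at time \<open>T\<close> and appends \<open>v j\<close> at step \<open>T + j\<close> if that step
  is free for the reach spaces, whatever its own output is; these runs parametrise the reach
  spaces (\<open>reach_space_eq_runs\<close>).\<close>

fun run :: "nat \<Rightarrow> (nat \<Rightarrow> real) \<Rightarrow> (nat \<Rightarrow> real) \<Rightarrow> nat \<Rightarrow> nat \<Rightarrow> real" where
  "run T z v 0 = z"
| "run T z v (Suc i) =
     (if free (T + i) then shift (run T z v i) + v i *\<^sub>R e_last
      else companion (T + i) (run T z v i))"

lemma run_add: "run T (z + z') (v + v') i = run T z v i + run T z' v' i"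
proof (induction i)
  case (Suc i)
  \<comment> \<open>the pointwise simp rules would eta-expand the state-valued terms\<close>
  then show ?case
    by (simp del: plus_fun_apply scaleR_fun_apply
        add: plus_fun_apply[of v v' i] linear_add[OF linear_shift] linear_add[OF linear_companion]
        scaleR_add_left algebra_simps)
qed simp

lemma run_scaleR: "run T (r *\<^sub>R z) (r *\<^sub>R v) i = r *\<^sub>R run T z v i"
proof (induction i)
  case (Suc i)
  then show ?case
    by (simp del: scaleR_fun_apply plus_fun_apply
        add: scaleR_fun_apply[of r v i] linear_scale[OF linear_shift]
        linear_scale[OF linear_companion] scaleR_add_right)
qed simp

lemma run_split: "run T z v i = run T z 0 i + run T 0 v i"
  using run_add[of T z 0 0 v i] by simp

lemma linear_run: "linear (\<lambda>z. run T z 0 i)"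
  by (rule linearI) (metis add_0 run_add, metis scaleR_zero_right run_scaleR)

lemma run_cong: "(\<And>j. j < i \<Longrightarrow> v j = v' j) \<Longrightarrow> run T z v i = run T z v' i"
  by (induction i) auto

lemma reach_space_eq_runs:
  "reach_space (T + i) = {run T z v i | z v. z \<in> reach_space T}"
proof (induction i)
  case (Suc i)
  show ?case
  proof (cases "free (T + i)")
    case True
    have new_value: "shift (run T z v i) + u *\<^sub>R e_last = run T z (v(i := u)) (Suc i)" for z v u
      using True run_cong[of i v "v(i := u)"] by simp
    show ?thesis
    proof
      show "reach_space (T + Suc i) \<subseteq> {run T z v (Suc i) | z v. z \<in> reach_space T}"
        unfolding add_Suc_right reach_space_Suc_free[OF True] Suc by (force simp only: new_value)
      show "{run T z v (Suc i) | z v. z \<in> reach_space T} \<subseteq> reach_space (T + Suc i)"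
        unfolding add_Suc_right reach_space_Suc_free[OF True] Suc using True by auto
    qed
  next
    case False
    then show ?thesis
      using Suc by (auto simp: reach_space_Suc_forced)
  qed
qed simp

lemma run_coord_Suc: "Suc p < n \<Longrightarrow> run T z v (Suc i) p = run T z v i (Suc p)"
  by (simp add: shift_def companion_def unit_fun_def)

lemma run_last: "free (T + i) \<Longrightarrow> run T z v (Suc i) (n - 1) = v i"
  using n_pos by (simp add: shift_def unit_fun_def)

lemma run_coord_add: "p + d < n \<Longrightarrow> run T z v (i + d) p = run T z v i (p + d)"
proof (induction d arbitrary: p)
  case (Suc d)
  then show ?case
    using run_coord_Suc[of p T z v "i + d"] Suc.IH[of "Suc p"] by simp
qed simp

lemma run_final_coord: "j < n \<Longrightarrow> free (T + j) \<Longrightarrow> run T z v n j = v j"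
  using run_coord_add[of j "n - 1 - j" T z v "Suc j"] run_last[of T j z v] by simp

definition free_steps :: "nat \<Rightarrow> nat set" where
  "free_steps T = {i. i < n \<and> free (T + i)}"

lemma finite_free_steps: "finite (free_steps T)"
  by (simp add: free_steps_def)

definition observation :: "nat \<Rightarrow> (nat \<Rightarrow> real) \<Rightarrow> nat \<Rightarrow> real" where
  "observation T z = (\<Sum>i\<in>free_steps T. dot (c (T + i)) (open_loop T z i) *\<^sub>R unit_fun i)"

lemma linear_observation: "linear (observation T)"
  unfolding observation_def
  by (intro linear_compose_sum ballI linear_compose[OF linear_compose[OF linear_open_loop linear_dot]
        linear_scaleR_left, unfolded o_def])

lemma observation_coord:
  "j \<in> free_steps T \<Longrightarrow> observation T z j = dot (c (T + j)) (open_loop T z j)"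
  using finite_free_steps
  by (simp add: observation_def unit_fun_def if_distrib[of "\<lambda>r. _ * r"] cong: if_cong)

text \<open>Observability applies because the outputs at the non-free steps of the block vanish on the
  whole reach space.\<close>

lemma inj_on_observation: "inj_on (observation T) (reach_space T)"
  unfolding linear_inj_on_iff_eq_0[OF linear_observation subspace_reach_space]
proof clarify
  fix z assume z: "z \<in> reach_space T" "observation T z = 0"
  show "z = 0"
  proof (rule observable)
    show "z \<in> states"
      using z(1) reach_space_subset_states by blast
    fix j assume "j < n"
    show "dot (c (T + j)) (open_loop T z j) = 0"
    proof (cases "free (T + j)")
      case True
      then show ?thesis
        using observation_coord[of j T z] z(2) \<open>j < n\<close> by (simp add: free_steps_def)
    next
      case False
      then show ?thesis
        using open_loop_in_reach_space[OF z(1)] by (auto simp: free_def)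
    qed
  qed
qed

lemma dim_reach_space_le_card_free_steps: "dim (reach_space T) \<le> card (free_steps T)"
proof -
  have "dim (reach_space T) = dim (observation T ` reach_space T)"
    using dim_linear_image_inj_on[OF linear_observation subspace_reach_space inj_on_observation]
    by simp
  also have "\<dots> \<le> card (unit_fun ` free_steps T)"
  proof (rule dim_le_card)
    show "observation T ` reach_space T \<subseteq> span (unit_fun ` free_steps T)"
      unfolding observation_def by (auto intro!: span_sum span_scale simp: span_base)
  qed (simp add: finite_free_steps)
  also have "\<dots> \<le> card (free_steps T)"
    using card_image_le[OF finite_free_steps] .
  finally show ?thesis .
qed

text \<open>If the dimension does not grow over the block \<open>[T, T + n]\<close>, choosing \<open>0\<close> at every free step
  steers every state of the reach space to \<open>0\<close>: otherwise the final state and the final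
  states produced by the values \<open>unit_fun i\<close> would be \<open>card (free_steps T) + 1\<close> independent
  vectors in a space of dimension at most \<open>card (free_steps T)\<close>.\<close>

lemma run_zero_choice_vanishes:
  assumes flat: "dim (reach_space (T + n)) = dim (reach_space T)" and z: "z \<in> reach_space T"
  shows "run T z 0 n = 0"
proof (rule ccontr)
  assume nonzero: "run T z 0 n \<noteq> 0"
  define w where "w i = run T 0 (unit_fun i) n" for i
  have w: "w i j = (if i = j then 1 else 0)" if "i \<in> free_steps T" "j \<in> free_steps T" for i j
    using that run_final_coord[of j T 0 "unit_fun i"] by (auto simp: w_def free_steps_def unit_fun_def)
  have final_zero: "run T z 0 n j = 0" if "j \<in> free_steps T" for j
    using that run_final_coord[of j T z 0] by (simp add: free_steps_def)
  have "run T z' v n \<in> reach_space (T + n)" if "z' \<in> reach_space T" for z' v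
    unfolding reach_space_eq_runs using that by blast
  then have "insert (run T z 0 n) (w ` free_steps T) \<subseteq> reach_space (T + n)"
    using z subspace_0[OF subspace_reach_space] by (auto simp: w_def)
  then have "card (free_steps T) < dim (reach_space (T + n))"
    using card_lt_dim_if_coordinate_family[OF finite_free_steps w nonzero final_zero _
        order.trans[OF reach_space_subset_states states_subset_span]]
    by blast
  then show False
    using flat dim_reach_space_le_card_free_steps[of T] by simp
qed

lemma zero_choice_run_eq_unit_fun_0:
  assumes flat: "dim (reach_space (T + n)) = dim (reach_space T)"
    and z: "z \<in> reach_space T" and "i < n" and unit: "run T z v i = unit_fun 0"
  shows "run T z 0 i = unit_fun 0"
proof
  fix p
  have "run T z 0 i \<in> reach_space (T + i)"
    unfolding reach_space_eq_runs using z by blast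
  then have in_states: "run T z 0 i \<in> states"
    using reach_space_subset_states by blast
  consider "p + i < n" | "p < n" "n \<le> p + i" | "n \<le> p"
    by linarith
  then show "run T z 0 i p = unit_fun 0 p"
  proof cases
    case 1
    then have "run T 0 v i p = 0"
      using run_coord_add[of p i T 0 v 0] by simp
    moreover have "unit_fun 0 p = run T z 0 i p + run T 0 v i p"
      using unit run_split[of T z v i] by (metis plus_fun_apply)
    ultimately show ?thesis
      by simp
  next
    case 2
    then have "run T z 0 i p = run T z 0 n (p - (n - i))"
      using run_coord_add[of "p - (n - i)" "n - i" T z 0 i] \<open>i < n\<close> by simp
    also have "\<dots> = 0"
      using run_zero_choice_vanishes[OF flat z] by simp
    finally show ?thesis
      using 2 \<open>i < n\<close> by (simp add: unit_fun_def)
  qed (use in_states n_pos in \<open>simp_all add: states_def unit_fun_def\<close>)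
qed

lemma free_output_nonzero:
  assumes flat: "dim (reach_space (T + n)) = dim (reach_space T)" and "i \<in> free_steps T"
  shows "\<exists>z\<in>reach_space T. dot (c (T + i)) (run T z 0 i) \<noteq> 0"
proof -
  have "i < n" and "free (T + i)"
    using assms(2) by (simp_all add: free_steps_def)
  then have "unit_fun 0 \<in> reach_space (T + i)"
    by (rule unit_fun_0_in_flat_block[OF flat])
  then obtain z v where z: "z \<in> reach_space T" and "unit_fun 0 = run T z v i"
    unfolding reach_space_eq_runs by blast
  then have "run T z 0 i = unit_fun 0"
    using zero_choice_run_eq_unit_fun_0[OF flat z \<open>i < n\<close>] by simp
  then have "dot (c (T + i)) (run T z 0 i) \<noteq> 0"
    using c_first_nonzero by (simp add: dot_unit_fun_0)
  then show ?thesis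
    using z by blast
qed

definition generic_at :: "nat \<Rightarrow> bool" where
  "generic_at k \<longleftrightarrow> (\<forall>L :: ((nat \<Rightarrow> real) \<Rightarrow> real) set. finite L \<longrightarrow>
     (\<forall>l\<in>L. linear l \<and> (\<exists>w\<in>reach_space k. l w \<noteq> 0)) \<longrightarrow>
     (\<exists>xs. xs 0 = x0 \<and> admissible k xs \<and> (\<forall>l\<in>L. l (xs k) \<noteq> 0)))"

lemma generic_at_0: "generic_at 0"
  unfolding generic_at_def
proof clarify
  fix L :: "((nat \<Rightarrow> real) \<Rightarrow> real) set"
  assume L: "\<forall>l\<in>L. linear l \<and> (\<exists>w\<in>reach_space 0. l w \<noteq> 0)"
  have "l x0 \<noteq> 0" if l: "l \<in> L" for l
  proof -
    have "\<exists>w\<in>span {x0}. l w \<noteq> 0"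
      using L l by simp
    then obtain r where "l (r *\<^sub>R x0) \<noteq> 0"
      unfolding span_singleton by blast
    then show ?thesis
      using L l by (simp add: linear_scale)
  qed
  then show "\<exists>xs. xs 0 = x0 \<and> admissible 0 xs \<and> (\<forall>l\<in>L. l (xs 0) \<noteq> 0)"
    by (intro exI[of _ "\<lambda>_. x0"]) (simp add: admissible_def)
qed

lemma generic_at_Suc_forced:
  assumes "generic_at k" and "\<not> free k"
  shows "generic_at (Suc k)"
  unfolding generic_at_def
proof clarify
  fix L :: "((nat \<Rightarrow> real) \<Rightarrow> real) set"
  assume "finite L" and L: "\<forall>l\<in>L. linear l \<and> (\<exists>w\<in>reach_space (Suc k). l w \<noteq> 0)"
  let ?L = "(\<lambda>l. l \<circ> companion k) ` L"
  have "\<forall>l'\<in>?L. linear l' \<and> (\<exists>w\<in>reach_space k. l' w \<noteq> 0)"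
    using L linear_compose[OF linear_companion] by (auto simp: reach_space_Suc_forced[OF assms(2)])
  moreover have "finite ?L"
    using \<open>finite L\<close> by simp
  ultimately obtain xs where xs: "xs 0 = x0" "admissible k xs" "\<forall>l'\<in>?L. l' (xs k) \<noteq> 0"
    using assms(1) unfolding generic_at_def by (elim allE[of _ ?L]) blast
  define xs' where "xs' = xs(Suc k := companion k (xs k))"
  have "admissible (Suc k) xs'"
    unfolding xs'_def by (rule admissible_extend[OF xs(2) admissible_step_companion])
  then show "\<exists>xs. xs 0 = x0 \<and> admissible (Suc k) xs \<and> (\<forall>l\<in>L. l (xs (Suc k)) \<noteq> 0)"
    using xs(1,3) by (intro exI[of _ xs']) (simp add: xs'_def)
qed

text \<open>At a free step the new last coordinate is chosen off the finitely many values that would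
  put the state into one of the hyperplanes.\<close>

lemma generic_at_Suc_free:
  assumes "generic_at k" and "free k"
  shows "generic_at (Suc k)"
  unfolding generic_at_def
proof clarify
  fix L :: "((nat \<Rightarrow> real) \<Rightarrow> real) set"
  assume "finite L" and L: "\<forall>l\<in>L. linear l \<and> (\<exists>w\<in>reach_space (Suc k). l w \<noteq> 0)"
  let ?L = "insert (dot (c k)) ((\<lambda>l. l \<circ> shift) ` {l\<in>L. l e_last = 0})"
  have "\<forall>l'\<in>?L. linear l' \<and> (\<exists>w\<in>reach_space k. l' w \<noteq> 0)"
  proof
    fix l' assume l': "l' \<in> ?L"
    show "linear l' \<and> (\<exists>w\<in>reach_space k. l' w \<noteq> 0)"
    proof (cases "l' = dot (c k)")
      case True
      then show ?thesis
        using \<open>free k\<close> linear_dot by (simp add: free_def)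
    next
      case False
      then obtain l where l: "l \<in> L" "l e_last = 0" "l' = l \<circ> shift"
        using l' by blast
      then obtain z v where "z \<in> reach_space k" "l (shift z + v *\<^sub>R e_last) \<noteq> 0"
        using L unfolding reach_space_Suc_free[OF \<open>free k\<close>] by blast
      moreover have "l (shift z + v *\<^sub>R e_last) = l (shift z)"
        using L l(1,2) by (simp add: linear_add linear_scale)
      ultimately show ?thesis
        using L l linear_compose[OF linear_shift] by auto
    qed
  qed
  moreover have "finite ?L"
    using \<open>finite L\<close> by simp
  ultimately obtain xs where xs: "xs 0 = x0" "admissible k xs" "\<forall>l'\<in>?L. l' (xs k) \<noteq> 0"
    using assms(1) unfolding generic_at_def by (elim allE[of _ ?L]) blast
  then have "linear l \<and> (l (shift (xs k)) \<noteq> 0 \<or> l e_last \<noteq> 0)" if "l \<in> L" for l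
    using L that by auto
  then obtain v where v: "\<forall>l\<in>L. l (shift (xs k) + v *\<^sub>R e_last) \<noteq> 0"
    using exists_avoiding_hyperplanes[OF \<open>finite L\<close>] by blast
  have "admissible_step k (xs k) (shift (xs k) + v *\<^sub>R e_last)"
    using xs(3) unfolding admissible_step_def by auto
  then have "admissible (Suc k) (xs(Suc k := shift (xs k) + v *\<^sub>R e_last))"
    by (rule admissible_extend[OF xs(2)])
  then show "\<exists>xs. xs 0 = x0 \<and> admissible (Suc k) xs \<and> (\<forall>l\<in>L. l (xs (Suc k)) \<noteq> 0)"
    using xs(1) v by (intro exI[of _ "xs(Suc k := shift (xs k) + v *\<^sub>R e_last)"])
      (simp del: plus_fun_apply scaleR_fun_apply)
qed

lemma generic_at: "generic_at k"
  by (induction k) (auto intro: generic_at_0 generic_at_Suc_forced generic_at_Suc_free)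

lemma admissible_append_zero_choice_run:
  assumes "admissible T xs"
    and outputs: "\<And>i. i < m \<Longrightarrow> free (T + i) \<Longrightarrow> dot (c (T + i)) (run T (xs T) 0 i) \<noteq> 0"
  shows "admissible (T + m) (\<lambda>k. if k \<le> T then xs k else run T (xs T) 0 (k - T))"
proof -
  define ys where "ys = (\<lambda>k. if k \<le> T then xs k else run T (xs T) 0 (k - T))"
  have ys_run: "ys (T + i) = run T (xs T) 0 i" for i
    by (cases i) (simp_all add: ys_def)
  have "admissible_step k (ys k) (ys (Suc k))" if "k < T + m" for k
  proof (cases "k < T")
    case True
    then show ?thesis
      using assms(1) by (simp add: ys_def admissible_def)
  next
    case False
    define i where "i = k - T"
    have i: "k = T + i" "i < m"
      using False that by (simp_all add: i_def)
    show ?thesis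
    proof (cases "free (T + i)")
      case True
      then have "ys (Suc k) = shift (ys k) + 0 *\<^sub>R e_last"
        using i ys_run[of i] ys_run[of "Suc i"] by simp
      moreover have "dot (c k) (ys k) \<noteq> 0"
        using outputs[of i] True i ys_run[of i] by simp
      ultimately show ?thesis
        unfolding admissible_step_def by blast
    next
      case False
      then have "ys (Suc k) = companion k (ys k)"
        using i ys_run[of i] ys_run[of "Suc i"] by simp
      then show ?thesis
        using admissible_step_companion by simp
    qed
  qed
  then show ?thesis
    by (simp add: admissible_def flip: ys_def)
qed

lemma flat_block_reaches_zero:
  assumes flat: "dim (reach_space (T + n)) = dim (reach_space T)"
  shows "\<exists>xs. xs 0 = x0 \<and> admissible (T + n) xs \<and> xs (T + n) = 0"
proof -
  define L where "L = (\<lambda>i z. dot (c (T + i)) (run T z 0 i)) ` free_steps T"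
  have "finite L"
    by (simp add: L_def finite_free_steps)
  moreover have "\<forall>l\<in>L. linear l \<and> (\<exists>w\<in>reach_space T. l w \<noteq> 0)"
    using free_output_nonzero[OF flat] linear_compose[OF linear_run linear_dot]
    by (auto simp: L_def o_def)
  ultimately obtain xs where xs: "xs 0 = x0" "admissible T xs" and "\<forall>l\<in>L. l (xs T) \<noteq> 0"
    using generic_at[of T] unfolding generic_at_def by blast
  then have "dot (c (T + i)) (run T (xs T) 0 i) \<noteq> 0" if "i < n" "free (T + i)" for i
    using that by (auto simp: L_def free_steps_def)
  then have "admissible (T + n) (\<lambda>k. if k \<le> T then xs k else run T (xs T) 0 (k - T))"
    using admissible_append_zero_choice_run[OF xs(2)] by blast
  moreover have "run T (xs T) 0 n = 0"
    using run_zero_choice_vanishes[OF flat admissible_in_reach_space[OF xs(2,1)]] .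
  ultimately show ?thesis
    using xs(1) n_pos
    by (intro exI[of _ "\<lambda>k. if k \<le> T then xs k else run T (xs T) 0 (k - T)"]) auto
qed

theorem reaches_zero:
  "\<exists>xs. xs 0 = x0 \<and> admissible ((n + 1) * n) xs \<and> xs ((n + 1) * n) = 0"
proof -
  obtain j where j: "j \<le> n" and flat: "dim (reach_space (j * n + n)) = dim (reach_space (j * n))"
    using exists_flat_block by blast
  obtain xs where xs: "xs 0 = x0" "admissible (j * n + n) xs" "xs (j * n + n) = 0"
    using flat_block_reaches_zero[OF flat] by blast
  have le: "j * n + n \<le> (n + 1) * n"
    using j by simp
  define ys where "ys = (\<lambda>k. if k \<le> j * n + n then xs k else 0)"
  have "ys ((n + 1) * n) = 0"
    using le xs(3) by (cases "(n + 1) * n = j * n + n") (auto simp: ys_def algebra_simps)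
  moreover have "ys 0 = x0"
    by (simp add: ys_def xs(1))
  ultimately show ?thesis
    using admissible_pad_zero[OF xs(2,3) le, folded ys_def] by blast
qed

end

context companion_form
begin

lemma scalar_prod_vec: "a \<in> carrier_vec n \<Longrightarrow> a \<bullet> vec n z = dot (\<lambda>i. a $ i) z"
  by (simp add: scalar_prod_def dot_def atLeast0LessThan)

lemma unit_vec_last: "unit_vec n (n - 1) = vec n e_last"
  by (simp add: unit_vec_def unit_fun_def)

lemma mult_vec_ccf:
  assumes ccf: "ccf n M b" and last_row: "\<alpha> k = (\<lambda>j. M $$ (n - 1, j))"
  shows "M *\<^sub>v vec n z = vec n (companion k z)"
proof
  have M: "M \<in> carrier_mat n n"
    using ccf by (simp add: ccf_def)
  then show "dim_vec (M *\<^sub>v vec n z) = dim_vec (vec n (companion k z))"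
    by simp
  fix i assume "i < dim_vec (vec n (companion k z))"
  then have i: "i < n"
    by simp
  have row: "(M *\<^sub>v vec n z) $ i = (\<Sum>j<n. M $$ (i, j) * z j)"
    using M i by (simp add: scalar_prod_def atLeast0LessThan)
  show "(M *\<^sub>v vec n z) $ i = vec n (companion k z) $ i"
  proof (cases "Suc i < n")
    case True
    have "(\<Sum>j<n. M $$ (i, j) * z j) = (\<Sum>j<n. if j = Suc i then z j else 0)"
      using ccf True by (intro sum.cong) (auto simp: ccf_def)
    then show ?thesis
      using row True i by (simp add: companion_def shift_def unit_fun_def)
  next
    case False
    then have "i = n - 1"
      using i by simp
    then show ?thesis
      using row i by (simp add: companion_def shift_def unit_fun_def dot_def last_row)
  qed
qed

lemma traj_eq_open_loop:
  assumes ccf: "\<forall>k. ccf n (A k) (b k)" and last_row: "\<And>k. \<alpha> k = (\<lambda>j. A (int k) $$ (n - 1, j))"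
  shows "traj A b (int T) (vec n z) (\<lambda>_. 0) j = vec n (open_loop T z j)"
proof (induction j)
  case (Suc j)
  have "b (int (T + j)) \<in> carrier_vec n" and "A (int (T + j)) \<in> carrier_mat n n"
    using ccf by (simp_all add: ccf_def)
  then have "traj A b (int T) (vec n z) (\<lambda>_. 0) (Suc j) = A (int (T + j)) *\<^sub>v vec n (open_loop T z j)"
    using Suc by (intro eq_vecI) auto
  then show ?case
    using mult_vec_ccf[OF spec[OF ccf] last_row, of "T + j"] by simp
qed simp

lemma observable_if_completely_observable:
  assumes ccf: "\<forall>k. ccf n (A k) (b k)" and last_row: "\<And>k. \<alpha> k = (\<lambda>j. A (int k) $$ (n - 1, j))"
    and c: "\<forall>k. c k \<in> carrier_vec n" and obs: "completely_observable n A b c"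
    and z: "z \<in> states"
    and outputs: "\<And>j. j < n \<Longrightarrow> dot (\<lambda>i. c (int (T + j)) $ i) (open_loop T z j) = 0"
  shows "z = 0"
proof -
  have "c (int T + int j) \<bullet> traj A b (int T) (vec n w) (\<lambda>_. 0) j
      = dot (\<lambda>i. c (int (T + j)) $ i) (open_loop T w j)" for w j
    using traj_eq_open_loop[OF ccf last_row] scalar_prod_vec c by simp
  moreover have "open_loop T 0 j = 0" for j
    using linear_0[OF linear_open_loop] .
  ultimately have "vec n z = vec n 0"
    using obs outputs linear_0[OF linear_dot] unfolding completely_observable_def
    by (metis carrier_vec_dim_vec dim_vec)
  then show ?thesis
    using z by (auto simp: fun_eq_iff states_def vec_eq_iff) (metis not_le)
qed

end

context ccf_system
begin

text \<open>The feedback realising an admissible trajectory; when the output vanishes any gain does.\<close>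

definition gain :: "(nat \<Rightarrow> nat \<Rightarrow> real) \<Rightarrow> nat \<Rightarrow> real" where
  "gain xs k = (if dot (c k) (xs k) = 0 then 0
     else (xs (Suc k) (n - 1) - dot (\<alpha> k) (xs k)) / dot (c k) (xs k))"

lemma closed_loop_eq_admissible:
  assumes ccf: "\<forall>k. ccf n (A k) (b k)" and last_row: "\<And>k. \<alpha> k = (\<lambda>j. A (int k) $$ (n - 1, j))"
    and outputs: "\<And>k. c k = (\<lambda>i. cv (int k) $ i)" and cv: "\<forall>k. cv k \<in> carrier_vec n"
    and adm: "admissible N xs" and "k \<le> N"
  shows "closed_loop A b cv (gain xs) (vec n (xs 0)) k = vec n (xs k)"
  using \<open>k \<le> N\<close>
proof (induction k)
  case (Suc k)
  have "admissible_step k (xs k) (xs (Suc k))"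
    using adm Suc.prems by (simp add: admissible_def)
  then obtain v where v: "xs (Suc k) = shift (xs k) + v *\<^sub>R e_last"
      and forced: "dot (c k) (xs k) = 0 \<Longrightarrow> v = dot (\<alpha> k) (xs k)"
    unfolding admissible_step_def by blast
  have "xs (Suc k) (n - 1) = v"
    using v n_pos by (simp add: shift_def unit_fun_def)
  then have new_last: "dot (\<alpha> k) (xs k) + gain xs k * dot (c k) (xs k) = v"
    using forced by (simp add: gain_def)
  have "b (int k) = vec n e_last"
    using ccf unit_vec_last by (simp add: ccf_def)
  moreover have "cv (int k) \<bullet> vec n (xs k) = dot (c k) (xs k)"
    using scalar_prod_vec cv outputs by simp
  ultimately have "closed_loop A b cv (gain xs) (vec n (xs 0)) (Suc k)
      = vec n (companion k (xs k)) + (gain xs k * dot (c k) (xs k)) \<cdot>\<^sub>v vec n e_last"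
    using Suc mult_vec_ccf[OF spec[OF ccf] last_row] by simp
  also have "\<dots> = vec n (xs (Suc k))"
    using new_last v by (auto simp: companion_def algebra_simps)
  finally show ?case .
qed simp

end

lemma ccf_system_if_completely_observable:
  assumes "n \<ge> 1" and ccf: "\<forall>k. ccf n (A k) (b k)" and c: "\<forall>k. c k \<in> carrier_vec n"
    and obs: "completely_observable n A b c" and "\<forall>k::nat. c (int k) $ 0 \<noteq> 0"
  shows "ccf_system n (\<lambda>k j. A (int k) $$ (n - 1, j)) (\<lambda>k i. c (int k) $ i)"
proof -
  interpret companion_form n "\<lambda>k j. A (int k) $$ (n - 1, j)"
    using assms(1) by unfold_locales simp
  show ?thesis
  proof unfold_locales
    show "c (int k) $ 0 \<noteq> 0" for k
      using assms(5) by simp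
    show "z = 0" if "z \<in> states"
      and "\<And>j. j < n \<Longrightarrow> dot (\<lambda>i. c (int (T + j)) $ i) (open_loop T z j) = 0" for z T
      using observable_if_completely_observable[OF ccf _ c obs that(1), where T = T] that(2)
      by simp
  qed
qed

theorem proposition5:
  fixes n :: nat and A :: "int \<Rightarrow> real mat" and b c :: "int \<Rightarrow> real vec"
  assumes "n \<ge> 1"
    and "\<forall>k. ccf n (A k) (b k)"
    and "\<forall>k. c k \<in> carrier_vec n"
    and "completely_observable n A b c"
    and "\<forall>k::nat. c (int k) $ 0 \<noteq> 0"
  shows "\<exists>N::nat. \<forall>x0 \<in> carrier_vec n. \<exists>F :: nat \<Rightarrow> real. closed_loop A b c F x0 N = 0\<^sub>v n"
proof -
  define \<alpha> where "\<alpha> k = (\<lambda>j. A (int k) $$ (n - 1, j))" for k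
  define c' where "c' k = (\<lambda>i. c (int k) $ i)" for k
  interpret ccf_system n \<alpha> c'
    using ccf_system_if_completely_observable[OF assms] unfolding \<alpha>_def c'_def .
  show ?thesis
  proof (intro exI[of _ "(n + 1) * n"] ballI)
    fix x0 :: "real vec" assume x0: "x0 \<in> carrier_vec n"
    define z0 where "z0 i = (if i < n then x0 $ i else 0)" for i
    interpret ccf_reachable n \<alpha> c' z0
      by unfold_locales (simp add: states_def z0_def)
    obtain xs where xs: "xs 0 = z0" "admissible ((n + 1) * n) xs" "xs ((n + 1) * n) = 0"
      using reaches_zero by blast
    have "vec n (xs 0) = x0"
      unfolding xs(1) using x0 by (auto simp: z0_def)
    then have "closed_loop A b c (gain xs) x0 ((n + 1) * n) = vec n (xs ((n + 1) * n))"
      using closed_loop_eq_admissible[OF assms(2) \<alpha>_def c'_def assms(3) xs(2) order.refl] by simp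
    also have "\<dots> = 0\<^sub>v n"
      unfolding xs(3) zero_vec_def zero_fun_def ..
    finally show "\<exists>F. closed_loop A b c F x0 ((n + 1) * n) = 0\<^sub>v n"
      by blast
  qed
qed

end
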